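(* Let $z,x,y\in[0,1]$ satisfy $z=x+y$, and write their concise binary expansions as $z=(z_0.z_1z_2\ldots)_2$, $x=(x_0.x_1x_2\ldots)_2$, $y=(y_0.y_1y_2\ldots)_2$. Suppose $\ell\ge 0$ is an index such that $z_\ell=1$ and $z_j=0$ for all $j>\ell$. Then the sequence of bit pairs $(x_j,y_j)_{j\ge \ell}$ satisfies exactly one of the following three patterns: (1) $(x_\ell,y_\ell)\in\{(0,1),(1,0)\}$ and $(x_j,y_j)=(0,0)$ for all $j>\ell$; (2) $(x_\ell,y_\ell)\in\{(0,0),(1,1)\}$, and there is an integer $k\ge 0$ such that $(x_j,y_j)\in\{(0,1),(1,0)\}$ for $\ell<j\le \ell+k$, $(x_{\ell+k+1},y_{\ell+k+1})=(1,1)$, and $(x_j,y_j)=(0,0)$ for all $j>\ell+k+1$; (3) $(x_\ell,y_\ell)\in\{(0,0),(1,1)\}$ and $(x_j,y_j)\in\{(0,1),(1,0)\}$ for all $j>\ell$.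
   Context: A concise binary expansion of a real number is a binary representation $(z_0.z_1z_2\ldots)_2=\sum_{i\ge0} z_i2^{-i}$ with $z_i\in\{0,1\}$ that does not end in an infinite string of 1s. *)

theory Defs
  imports Complex_Main
begin

definition concise_binary_expansion :: "(nat \<Rightarrow> nat) \<Rightarrow> real \<Rightarrow> bool" where
  "concise_binary_expansion d r \<longleftrightarrow>
     (\<forall>i. d i \<in> {0, 1}) \<and>
     (\<lambda>i. real (d i) / 2 ^ i) sums r \<and>
     \<not> (\<exists>N. \<forall>i\<ge>N. d i = 1)"

end

theory Submission
  imports Defs
begin

text \<open>Multiply everything by \<open>2^l\<close>. Then \<open>2^l z\<close> is an odd integer, while
  \<open>2^l x\<close> and \<open>2^l y\<close> split into an integer prefix and a tail in \<open>[0, 1)\<close>,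
  the tail being below 1 precisely because the expansions are concise. Hence the two
  tails sum to 0 or 1. If they sum to 0, all later digits of \<open>x\<close> and \<open>y\<close> vanish
  and the odd parity forces \<open>x\<^sub>l + y\<^sub>l = 1\<close>: pattern (1). If they sum to 1,
  parity forces \<open>x\<^sub>l = y\<^sub>l\<close>, and doubling shows that tails summing to 1 are
  followed either by digits summing to 1 and tails again summing to 1, or by two
  digits 1 and vanishing tails: patterns (3) and (2).\<close>

definition binary_tail :: "(nat \<Rightarrow> nat) \<Rightarrow> nat \<Rightarrow> real" where
  "binary_tail d n = (\<Sum>i. real (d (n + 1 + i)) / 2 ^ (i + 1))"

fun binary_prefix :: "(nat \<Rightarrow> nat) \<Rightarrow> nat \<Rightarrow> nat" where
  "binary_prefix d 0 = d 0"
| "binary_prefix d (Suc n) = 2 * binary_prefix d n + d (Suc n)"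

context
  fixes d :: "nat \<Rightarrow> nat"
  assumes digits: "\<And>i. d i \<le> 1"
begin

lemma summable_binary_tail: "summable (\<lambda>i. real (d (n + 1 + i)) / 2 ^ (i + 1))"
proof (rule summable_comparison_test[OF _ sums_summable[OF power_half_series]])
  show "\<exists>N. \<forall>i\<ge>N. norm (real (d (n + 1 + i)) / 2 ^ (i + 1)) \<le> (1 / 2 :: real) ^ Suc i"
    using digits by (auto simp: power_divide divide_right_mono)
qed

lemma binary_tail_nonneg: "0 \<le> binary_tail d n"
  unfolding binary_tail_def by (rule suminf_nonneg[OF summable_binary_tail]) simp

lemma binary_tail_le_1: "binary_tail d n \<le> 1"
proof -
  have "binary_tail d n \<le> (\<Sum>i. (1 / 2 :: real) ^ Suc i)"
    unfolding binary_tail_def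
    by (rule suminf_le[OF _ summable_binary_tail sums_summable[OF power_half_series]])
       (use digits in \<open>auto simp: power_divide divide_right_mono\<close>)
  then show ?thesis
    using power_half_series sums_unique by metis
qed

lemma binary_tail_Suc: "binary_tail d n = (real (d (Suc n)) + binary_tail d (Suc n)) / 2"
proof -
  have "binary_tail d n = real (d (Suc n)) / 2 + (\<Sum>i. real (d (n + 1 + Suc i)) / 2 ^ (Suc i + 1))"
    unfolding binary_tail_def using suminf_split_head[OF summable_binary_tail, of n] by simp
  also have "(\<Sum>i. real (d (n + 1 + Suc i)) / 2 ^ (Suc i + 1)) = binary_tail d (Suc n) / 2"
    unfolding binary_tail_def using suminf_divide[OF summable_binary_tail, of "Suc n" 2]
    by (simp add: algebra_simps)
  finally show ?thesis
    by simp
qed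

lemma binary_tail_eq_0_iff: "binary_tail d n = 0 \<longleftrightarrow> (\<forall>i>n. d i = 0)"
proof -
  have "binary_tail d n = 0 \<longleftrightarrow> (\<forall>i. real (d (n + 1 + i)) / 2 ^ (i + 1) = 0)"
    unfolding binary_tail_def by (rule suminf_eq_zero_iff[OF summable_binary_tail]) simp
  also have "\<dots> \<longleftrightarrow> (\<forall>i. d (n + 1 + i) = 0)"
    by simp
  also have "\<dots> \<longleftrightarrow> (\<forall>i>n. d i = 0)"
    by (metis Suc_eq_plus1 add_Suc less_iff_Suc_add)
  finally show ?thesis .
qed

lemma binary_tail_less_1:
  assumes "\<not> (\<exists>N. \<forall>i\<ge>N. d i = 1)"
  shows "binary_tail d n < 1"
proof (rule ccontr)
  have next_one: "d (Suc m) = 1 \<and> binary_tail d (Suc m) = 1" if "binary_tail d m = 1" for m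
    using that binary_tail_Suc[of m] digits[of "Suc m"] binary_tail_le_1[of "Suc m"] by simp
  assume "\<not> binary_tail d n < 1"
  then have "binary_tail d n = 1"
    using binary_tail_le_1[of n] by linarith
  then have tail_1: "binary_tail d (n + k) = 1" for k
  proof (induction k)
    case (Suc k)
    then show ?case
      using next_one[of "n + k"] by simp
  qed simp
  have "d (Suc n + k) = 1" for k
    using next_one[OF tail_1[of k]] by simp
  then have "\<forall>i\<ge>Suc n. d i = 1"
    using le_Suc_ex by blast
  with assms show False
    by blast
qed

lemma binary_prefix_tail:
  assumes "(\<lambda>i. real (d i) / 2 ^ i) sums r"
  shows "2 ^ n * r = real (binary_prefix d n) + binary_tail d n"
proof (induction n)
  case 0
  have "(\<Sum>i. real (d (Suc i)) / 2 ^ Suc i) = r - real (d 0)"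
    using suminf_split_head[OF sums_summable[OF assms]] sums_unique[OF assms] by simp
  then show ?case
    unfolding binary_tail_def by simp
next
  case (Suc n)
  have "2 ^ Suc n * r = 2 * real (binary_prefix d n) + 2 * binary_tail d n"
    using Suc.IH by simp
  then show ?case
    using binary_tail_Suc[of n] by simp
qed

lemma binary_prefix_mod_2: "binary_prefix d n mod 2 = d n"
  using digits[of n] by (cases n) auto

end

context
  fixes a b :: "nat \<Rightarrow> nat"
  assumes a_digits: "\<And>i. a i \<le> 1" and b_digits: "\<And>i. b i \<le> 1"
    and a_not_eventually_1: "\<not> (\<exists>N. \<forall>i\<ge>N. a i = 1)"
    and b_not_eventually_1: "\<not> (\<exists>N. \<forall>i\<ge>N. b i = 1)"
begin

lemma binary_tails_sum_1_Suc:
  assumes "binary_tail a n + binary_tail b n = 1"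
  shows "(a (Suc n) + b (Suc n) = 1 \<and> binary_tail a (Suc n) + binary_tail b (Suc n) = 1) \<or>
    (a (Suc n) = 1 \<and> b (Suc n) = 1 \<and> binary_tail a (Suc n) = 0 \<and> binary_tail b (Suc n) = 0)"
proof -
  have "real (a (Suc n)) + real (b (Suc n)) + binary_tail a (Suc n) + binary_tail b (Suc n) = 2"
    using assms binary_tail_Suc[of a n, OF a_digits] binary_tail_Suc[of b n, OF b_digits]
    by (simp add: field_simps)
  moreover have "0 \<le> binary_tail a (Suc n)" "binary_tail a (Suc n) < 1"
    "0 \<le> binary_tail b (Suc n)" "binary_tail b (Suc n) < 1"
    using binary_tail_nonneg a_digits b_digits
      binary_tail_less_1[OF a_digits a_not_eventually_1]
      binary_tail_less_1[OF b_digits b_not_eventually_1] by auto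
  moreover have "a (Suc n) = 0 \<or> a (Suc n) = 1" "b (Suc n) = 0 \<or> b (Suc n) = 1"
    using a_digits[of "Suc n"] b_digits[of "Suc n"] by auto
  ultimately show ?thesis
    by (elim disjE) auto
qed

lemma binary_tails_sum_1_add:
  assumes "binary_tail a n + binary_tail b n = 1"
    and "\<forall>j. n < j \<and> j \<le> n + k \<longrightarrow> a j + b j = 1"
  shows "binary_tail a (n + k) + binary_tail b (n + k) = 1"
  using assms(2)
proof (induction k)
  case 0
  then show ?case
    using assms(1) by simp
next
  case (Suc k)
  then have "binary_tail a (n + k) + binary_tail b (n + k) = 1"
    by simp
  moreover have "a (Suc (n + k)) + b (Suc (n + k)) = 1"
    using Suc.prems by simp
  ultimately show ?case
    using binary_tails_sum_1_Suc[of "n + k"] by auto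
qed

lemma binary_tails_sum_1_cases:
  assumes "binary_tail a n + binary_tail b n = 1"
  shows "(\<exists>k. (\<forall>j. n < j \<and> j \<le> n + k \<longrightarrow> a j + b j = 1) \<and>
              a (n + k + 1) = 1 \<and> b (n + k + 1) = 1 \<and> (\<forall>j>n + k + 1. a j = 0 \<and> b j = 0)) \<or>
         (\<forall>j>n. a j + b j = 1)"
proof (cases "\<forall>j>n. a j + b j = 1")
  case False
  then have "\<exists>j. n < j \<and> a j + b j \<noteq> 1"
    by auto
  define m where "m = (LEAST j. n < j \<and> a j + b j \<noteq> 1)"
  have m: "n < m" "a m + b m \<noteq> 1"
    using LeastI_ex[OF \<open>\<exists>j. _\<close>] unfolding m_def by auto
  have before_m: "\<forall>j. n < j \<and> j < m \<longrightarrow> a j + b j = 1"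
    using not_less_Least unfolding m_def by blast
  obtain k where k: "m = n + k + 1"
    using m(1) less_iff_Suc_add by auto
  have "\<forall>j. n < j \<and> j \<le> n + k \<longrightarrow> a j + b j = 1"
    using before_m k by auto
  then have "binary_tail a (n + k) + binary_tail b (n + k) = 1"
    using binary_tails_sum_1_add[OF assms] by blast
  then have "a m = 1 \<and> b m = 1 \<and> binary_tail a m = 0 \<and> binary_tail b m = 0"
    using binary_tails_sum_1_Suc[of "n + k"] m(2) k by auto
  then have "a m = 1 \<and> b m = 1 \<and> (\<forall>j>m. a j = 0 \<and> b j = 0)"
    by (simp add: binary_tail_eq_0_iff[OF a_digits] binary_tail_eq_0_iff[OF b_digits])
  with \<open>\<forall>j. n < j \<and> j \<le> n + k \<longrightarrow> a j + b j = 1\<close> show ?thesis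
    unfolding k by blast
qed simp

end

lemma concise_binary_expansion_digits:
  assumes "concise_binary_expansion d r"
  shows "d i \<le> 1"
  using assms unfolding concise_binary_expansion_def by (metis insert_iff le_refl singletonD zero_le)

lemma binary_prefix_add_cases:
  assumes z: "concise_binary_expansion zd (x + y)"
    and x: "concise_binary_expansion xd x" and y: "concise_binary_expansion yd y"
    and "\<forall>j>l. zd j = 0"
  shows "binary_prefix zd l = binary_prefix xd l + binary_prefix yd l \<and>
      binary_tail xd l = 0 \<and> binary_tail yd l = 0 \<or>
    binary_prefix zd l = binary_prefix xd l + binary_prefix yd l + 1 \<and>
      binary_tail xd l + binary_tail yd l = 1"
proof -
  let ?X = "binary_prefix xd l" and ?Y = "binary_prefix yd l" and ?Z = "binary_prefix zd l"
  have zd: "\<And>i. zd i \<le> 1" and xd: "\<And>i. xd i \<le> 1" and yd: "\<And>i. yd i \<le> 1"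
    using z x y concise_binary_expansion_digits by blast+
  have sums: "(\<lambda>i. real (zd i) / 2 ^ i) sums (x + y)"
    "(\<lambda>i. real (xd i) / 2 ^ i) sums x" "(\<lambda>i. real (yd i) / 2 ^ i) sums y"
    using z x y unfolding concise_binary_expansion_def by blast+
  have tails_nonneg: "0 \<le> binary_tail xd l" "0 \<le> binary_tail yd l"
    using binary_tail_nonneg[of xd, OF xd] binary_tail_nonneg[of yd, OF yd] by blast+
  have "binary_tail xd l < 1" "binary_tail yd l < 1"
    using binary_tail_less_1[of xd, OF xd] binary_tail_less_1[of yd, OF yd] x y
    unfolding concise_binary_expansion_def by blast+
  moreover have "binary_tail zd l = 0"
    using binary_tail_eq_0_iff[of zd, OF zd] assms(4) by blast
  then have tails: "real ?X + real ?Y + (binary_tail xd l + binary_tail yd l) = real ?Z"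
    using binary_prefix_tail[of zd, OF zd sums(1)] binary_prefix_tail[of xd, OF xd sums(2)]
      binary_prefix_tail[of yd, OF yd sums(3)]
    by (simp add: algebra_simps)
  ultimately have "real (?X + ?Y) \<le> real ?Z" "real ?Z < real (?X + ?Y + 2)"
    using tails_nonneg by simp_all
  then have "?Z = ?X + ?Y \<or> ?Z = ?X + ?Y + 1"
    unfolding of_nat_le_iff of_nat_less_iff by linarith
  with tails tails_nonneg show ?thesis
    by auto
qed

lemma binary_sum_digit_cases:
  assumes z: "concise_binary_expansion zd (x + y)"
    and x: "concise_binary_expansion xd x" and y: "concise_binary_expansion yd y"
    and "zd l = 1" "\<forall>j>l. zd j = 0"
  shows "xd l + yd l = 1 \<and> (\<forall>j>l. xd j = 0 \<and> yd j = 0) \<or>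
    xd l = yd l \<and> (\<exists>k. (\<forall>j. l < j \<and> j \<le> l + k \<longrightarrow> xd j + yd j = 1) \<and>
        xd (l + k + 1) = 1 \<and> yd (l + k + 1) = 1 \<and> (\<forall>j>l + k + 1. xd j = 0 \<and> yd j = 0)) \<or>
    xd l = yd l \<and> (\<forall>j>l. xd j + yd j = 1)"
proof -
  have zd: "\<And>i. zd i \<le> 1" and xd: "\<And>i. xd i \<le> 1" and yd: "\<And>i. yd i \<le> 1"
    using z x y concise_binary_expansion_digits by blast+
  have parity: "binary_prefix zd l mod 2 = 1" "binary_prefix xd l mod 2 = xd l"
    "binary_prefix yd l mod 2 = yd l"
    using binary_prefix_mod_2[of zd, OF zd] binary_prefix_mod_2[of xd, OF xd]
      binary_prefix_mod_2[of yd, OF yd] assms(4) by simp_all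
  from binary_prefix_add_cases[OF z x y assms(5)] show ?thesis
  proof (elim disjE conjE)
    assume "binary_prefix zd l = binary_prefix xd l + binary_prefix yd l"
    with parity have "(xd l + yd l) mod 2 = 1"
      by (metis mod_add_eq)
    then have "xd l + yd l = 1"
      using xd[of l] yd[of l] by presburger
    moreover assume "binary_tail xd l = 0" "binary_tail yd l = 0"
    ultimately show ?thesis
      using binary_tail_eq_0_iff[of xd, OF xd] binary_tail_eq_0_iff[of yd, OF yd] by blast
  next
    assume "binary_prefix zd l = binary_prefix xd l + binary_prefix yd l + 1"
    with parity have "(xd l + yd l + 1) mod 2 = 1"
      by (metis mod_add_eq)
    then have "xd l = yd l"
      using xd[of l] yd[of l] by presburger
    moreover assume "binary_tail xd l + binary_tail yd l = 1"
    ultimately show ?thesis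
      using binary_tails_sum_1_cases[of xd yd l, OF xd yd] x y
      unfolding concise_binary_expansion_def by blast
  qed
qed

theorem theorem4p2:
  fixes x y z :: real and xd yd zd :: "nat \<Rightarrow> nat" and l :: nat
  assumes "x \<in> {0..1}" "y \<in> {0..1}" "z \<in> {0..1}" "z = x + y"
    and "concise_binary_expansion zd z"
    and "concise_binary_expansion xd x"
    and "concise_binary_expansion yd y"
    and "zd l = 1" "\<forall>j>l. zd j = 0"
  shows "let
      P1 = ((xd l, yd l) \<in> {(0, 1), (1, 0)} \<and> (\<forall>j>l. (xd j, yd j) = (0, 0)));
      P2 = ((xd l, yd l) \<in> {(0, 0), (1, 1)} \<and>
            (\<exists>k::nat. (\<forall>j. l < j \<and> j \<le> l + k \<longrightarrow> (xd j, yd j) \<in> {(0, 1), (1, 0)}) \<and>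
                     (xd (l + k + 1), yd (l + k + 1)) = (1, 1) \<and>
                     (\<forall>j>l + k + 1. (xd j, yd j) = (0, 0))));
      P3 = ((xd l, yd l) \<in> {(0, 0), (1, 1)} \<and> (\<forall>j>l. (xd j, yd j) \<in> {(0, 1), (1, 0)}))
    in (P1 \<and> \<not> P2 \<and> \<not> P3) \<or> (\<not> P1 \<and> P2 \<and> \<not> P3) \<or> (\<not> P1 \<and> \<not> P2 \<and> P3)"
proof -
  have xd: "\<And>j. xd j \<le> 1" and yd: "\<And>j. yd j \<le> 1"
    using assms(6,7) concise_binary_expansion_digits by blast+
  have pair_sum_1: "(xd j, yd j) \<in> {(0, 1), (1, 0)} \<longleftrightarrow> xd j + yd j = 1"
    and pair_eq: "(xd j, yd j) \<in> {(0, 0), (1, 1)} \<longleftrightarrow> xd j = yd j" for j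
    using xd[of j] yd[of j] by auto
  consider (single_carry) "xd l + yd l = 1" "\<forall>j>l. xd j = 0 \<and> yd j = 0"
    | (finite_carry) "xd l = yd l" "\<exists>k. (\<forall>j. l < j \<and> j \<le> l + k \<longrightarrow> xd j + yd j = 1) \<and>
        xd (l + k + 1) = 1 \<and> yd (l + k + 1) = 1 \<and> (\<forall>j>l + k + 1. xd j = 0 \<and> yd j = 0)"
    | (infinite_carry) "xd l = yd l" "\<forall>j>l. xd j + yd j = 1"
    using binary_sum_digit_cases[OF assms(5)[unfolded assms(4)] assms(6-9)] by blast
  then show ?thesis
  proof cases
    case single_carry
    moreover have "xd l \<noteq> yd l"
      using single_carry(1) by presburger
    ultimately show ?thesis
      unfolding Let_def pair_sum_1 pair_eq by simp
  next
    case finite_carry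
    moreover have "xd l + yd l \<noteq> 1"
      using finite_carry(1) by presburger
    moreover have "\<not> (\<forall>j>l. xd j + yd j = 1)"
    proof -
      from finite_carry(2) obtain k where "xd (l + k + 1) = 1" "yd (l + k + 1) = 1"
        by blast
      then show ?thesis
        by (auto intro!: exI[of _ "l + k + 1"])
    qed
    ultimately show ?thesis
      unfolding Let_def pair_sum_1 pair_eq by simp
  next
    case infinite_carry
    moreover have "xd l + yd l \<noteq> 1"
      using infinite_carry(1) by presburger
    moreover have "\<not> (xd (l + k + 1) = 1 \<and> yd (l + k + 1) = 1)" for k
      using infinite_carry(2)[rule_format, of "l + k + 1"] by simp
    ultimately show ?thesis
      unfolding Let_def pair_sum_1 pair_eq by auto
  qed
qed

end
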